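(* Let $d\ge1$, let $C>0$, $t_0>0$, and let $u_0(x)=Ce^{-|x|^2/(4t_0)}$ on $\mathbb{R}^d$. For each integer $k\ge0$ let $$u_k(x,t)=\sum_{|\alpha|\le k}\frac{(-1)^{|\alpha|}}{\alpha!}\Big(\int_{\mathbb{R}^d}y^\alpha u_0(y)\,dy\Big)D^\alpha G(x,t).$$ Fix $t$ with $0<t<t_0$. Then $\|u_k(\cdot,t)\|_{L^\infty(\mathbb{R}^d)}\to\infty$ as $k\to\infty$. More precisely: (i) if $d=1$, there is a constant $B>0$ independent of $k$ (depending on $C,t,t_0$) such that for every sufficiently large $k$, $$|u_k(0,t)|\ge B\Big(\frac{t_0}{t}\Big)^{\lfloor k/2\rfloor}\sqrt{\frac{1}{\lfloor k/2\rfloor-1}};$$ (ii) if $d\ge2$, there is a constant $c>0$ independent of $k$ (depending on $C,d,t,t_0$) such that for every integer $k\ge0$, $$|u_k(0,t)|\ge c\Big(\frac{t_0}{t}-1\Big)\Big(\frac{t_0}{t}\Big)^{\lfloor k/2\rfloor-1}.$$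
   Context: $G(x,t)=(4\pi t)^{-d/2}\exp(-|x|^2/(4t))$ is the heat kernel. Multi-index notation: $\alpha\in\mathbb{Z}_{\ge0}^d$, $|\alpha|=\sum\alpha_i$, $\alpha!=\prod\alpha_i!$, $y^\alpha=\prod y_i^{\alpha_i}$, $D^\alpha=\partial_{x_1}^{\alpha_1}\cdots\partial_{x_d}^{\alpha_d}$. $\lfloor\cdot\rfloor$ is the floor function. (The paper gives the explicit constant $c=C/((4t)^{d/2}\Gamma(d/2))$ in part (ii).) *)

theory Defs
  imports "HOL-Analysis.Analysis" "HOL-Probability.Essential_Supremum"
begin

text \<open>Points of R^d are functions nat => real; only coordinates i < d matter.
  Lebesgue measure on R^d is the product measure PiM {..<d} (\<lambda>_. lborel).\<close>

definition Rd :: "nat \<Rightarrow> (nat \<Rightarrow> real) measure" where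
  "Rd d = PiM {..<d} (\<lambda>_. lborel)"

definition sqnorm :: "nat \<Rightarrow> (nat \<Rightarrow> real) \<Rightarrow> real" where
  "sqnorm d x = (\<Sum>i<d. (x i)^2)"

definition heat :: "nat \<Rightarrow> (nat \<Rightarrow> real) \<Rightarrow> real \<Rightarrow> real" where
  "heat d x t = (4 * pi * t) powr (- real d / 2) * exp (- sqnorm d x / (4 * t))"

definition pdx :: "nat \<Rightarrow> ((nat \<Rightarrow> real) \<Rightarrow> real) \<Rightarrow> (nat \<Rightarrow> real) \<Rightarrow> real" where
  "pdx i f x = deriv (\<lambda>s. f (x(i := x i + s))) 0"

text \<open>D^alpha = d_{x_1}^{alpha_1} ... d_{x_d}^{alpha_d}, coordinates indexed 0..d-1.\<close>
fun Dmulti :: "nat \<Rightarrow> (nat \<Rightarrow> nat) \<Rightarrow> ((nat \<Rightarrow> real) \<Rightarrow> real) \<Rightarrow> (nat \<Rightarrow> real) \<Rightarrow> real" where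
  "Dmulti 0 \<alpha> f = f"
| "Dmulti (Suc i) \<alpha> f = (pdx i ^^ \<alpha> i) (Dmulti i \<alpha> f)"

definition mabs :: "nat \<Rightarrow> (nat \<Rightarrow> nat) \<Rightarrow> nat" where
  "mabs d \<alpha> = (\<Sum>i<d. \<alpha> i)"

definition mfact :: "nat \<Rightarrow> (nat \<Rightarrow> nat) \<Rightarrow> nat" where
  "mfact d \<alpha> = (\<Prod>i<d. fact (\<alpha> i))"

definition mpow :: "nat \<Rightarrow> (nat \<Rightarrow> real) \<Rightarrow> (nat \<Rightarrow> nat) \<Rightarrow> real" where
  "mpow d y \<alpha> = (\<Prod>i<d. (y i) ^ (\<alpha> i))"

definition multi_idx :: "nat \<Rightarrow> nat \<Rightarrow> (nat \<Rightarrow> nat) set" where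
  "multi_idx d k = {\<alpha>. (\<forall>i\<ge>d. \<alpha> i = 0) \<and> mabs d \<alpha> \<le> k}"

definition u0 :: "nat \<Rightarrow> real \<Rightarrow> real \<Rightarrow> (nat \<Rightarrow> real) \<Rightarrow> real" where
  "u0 d C t0 y = C * exp (- sqnorm d y / (4 * t0))"

definition uk :: "nat \<Rightarrow> real \<Rightarrow> real \<Rightarrow> nat \<Rightarrow> (nat \<Rightarrow> real) \<Rightarrow> real \<Rightarrow> real" where
  "uk d C t0 k x t = (\<Sum>\<alpha>\<in>multi_idx d k.
      ((-1) ^ mabs d \<alpha> / real (mfact d \<alpha>))
      * (integral\<^sup>L (Rd d) (\<lambda>y. mpow d y \<alpha> * u0 d C t0 y))
      * Dmulti d \<alpha> (\<lambda>z. heat d z t) x)"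

end

theory Submission
  imports Defs "HOL-Probability.Probability" "HOL-Computational_Algebra.Formal_Power_Series"
begin

text \<open>The heat kernel and the Gaussian moments of \<open>u\<^sub>0\<close> both factor over the coordinates, and odd
  moments vanish. Hence \<open>u\<^sub>k(0,t)\<close> is a positive constant times the \<open>n\<close>-th partial sum,
  \<open>n = \<lfloor>k/2\<rfloor>\<close>, of the binomial series of \<open>(1 + r)\<^sup>-\<^sup>d\<^sup>/\<^sup>2\<close> at \<open>r = t\<^sub>0/t > 1\<close>, i.e. of
  \<open>\<Sum> (-r)\<^sup>s a\<^sub>s\<close> with \<open>a\<^sub>s \<ge> 0\<close> the coefficients of \<open>(1 - x)\<^sup>-\<^sup>d\<^sup>/\<^sup>2\<close>. Once the terms \<open>r\<^sup>s a\<^sub>s\<close> increase,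
  such an alternating partial sum is, up to a fixed error, at least as large as the difference
  of its last two terms. For \<open>d \<ge> 2\<close> the \<open>a\<^sub>s\<close> are nondecreasing and at least 1, giving growth
  like \<open>r\<^sup>n\<close>; for \<open>d = 1\<close>, \<open>a\<^sub>s = binom(2s,s)/4\<^sup>s \<ge> 1/(2\<surd>s)\<close>, giving growth like \<open>r\<^sup>n/\<surd>n\<close>.
  Since \<open>u\<^sub>k(\<cdot>,t)\<close> is continuous, its essential supremum dominates \<open>|u\<^sub>k(0,t)|\<close>.\<close>

definition gaussian :: "real \<Rightarrow> real \<Rightarrow> real" where
  "gaussian t x = exp (- (x^2) / (4*t))"

definition gaussian_deriv :: "real \<Rightarrow> nat \<Rightarrow> real \<Rightarrow> real" where
  "gaussian_deriv t n = (deriv ^^ n) (gaussian t)"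

lemma gaussian_deriv_has_derivative_recurrence:
  assumes t: "t > 0"
  shows "(gaussian_deriv t n has_real_derivative
           -(s * gaussian_deriv t n s + real n * gaussian_deriv t (n - 1) s) / (2*t)) (at s)"
proof (induction n arbitrary: s rule: less_induct)
  case (less n)
  let ?g = "gaussian_deriv t"
  show ?case
  proof (cases n)
    case 0
    have "(gaussian t has_real_derivative gaussian t s * (- (2 * s) / (4*t))) (at s)"
      unfolding gaussian_def[abs_def] using t by (auto intro!: derivative_eq_intros simp: power2_eq_square)
    then show ?thesis using 0 t by (simp add: gaussian_deriv_def field_simps)
  next
    case (Suc m)
    have D: "(?g j has_real_derivative ?g (Suc j) x) (at x)" if "j < n" for j x
      using less.IH[OF that, of x] by (simp add: gaussian_deriv_def DERIV_imp_deriv)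
    have g_n: "?g n = (\<lambda>x. -(x * ?g m x + real m * ?g (m - 1) x) / (2*t))"
      using less.IH[of m] Suc by (auto simp: gaussian_deriv_def DERIV_imp_deriv)
    have D': "((\<lambda>x. real m * ?g (m - 1) x) has_real_derivative real m * ?g m s) (at s)"
      using DERIV_cmult[OF D[of "m - 1" s], of "real m"] Suc by (cases m) auto
    have "((\<lambda>x. -(x * ?g m x + real m * ?g (m - 1) x) / (2*t)) has_real_derivative
            -((1 * ?g m s + ?g n s * s) + real m * ?g m s) / (2*t)) (at s)"
      using DERIV_cdivide[OF DERIV_minus[OF DERIV_add[OF DERIV_mult[OF DERIV_ident D[of m s]] D']]] Suc
      by simp
    moreover have "-((1 * ?g m s + ?g n s * s) + real m * ?g m s) / (2*t)
        = -(s * ?g n s + real n * ?g (n - 1) s) / (2*t)"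
      using Suc by (simp add: algebra_simps)
    ultimately show ?thesis
      by (simp only: g_n[symmetric])
  qed
qed

lemma gaussian_deriv_Suc:
  "t > 0 \<Longrightarrow> gaussian_deriv t (Suc m) s = -(s * gaussian_deriv t m s + real m * gaussian_deriv t (m - 1) s) / (2*t)"
  using gaussian_deriv_has_derivative_recurrence[of t m s] by (simp add: gaussian_deriv_def DERIV_imp_deriv)

lemma DERIV_gaussian_deriv:
  "t > 0 \<Longrightarrow> (gaussian_deriv t m has_real_derivative gaussian_deriv t (Suc m) s) (at s)"
  using gaussian_deriv_has_derivative_recurrence[of t m s] by (simp add: gaussian_deriv_Suc)

lemma gaussian_deriv_even_0:
  assumes t: "t > 0"
  shows "gaussian_deriv t (2*m) 0 = (-1)^m * fact (2*m) / (fact m * (4*t)^m)"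
proof -
  have "gaussian_deriv t (2*m) 0 * (fact m * (4*t)^m) = (-1)^m * fact (2*m)"
  proof (induction m)
    case 0
    then show ?case by (simp add: gaussian_deriv_def gaussian_def)
  next
    case (Suc m)
    have "gaussian_deriv t (2 * Suc m) 0 = - (real (2*m + 1) * gaussian_deriv t (2*m) 0) / (2*t)"
      using gaussian_deriv_Suc[OF t, of "2*m + 1" 0] by simp
    then have "gaussian_deriv t (2 * Suc m) 0 * (fact (Suc m) * (4*t)^Suc m)
        = - (real (2*m + 1) * gaussian_deriv t (2*m) 0) / (2*t) * ((real m + 1) * fact m * (4*t * (4*t)^m))"
      by (simp add: algebra_simps)
    also have "\<dots> = - (real (2*m + 1) * (real m + 1) * 2) * (gaussian_deriv t (2*m) 0 * (fact m * (4*t)^m))"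
      using t by (simp add: field_simps)
    also have "\<dots> = (-1)^Suc m * ((2*real m + 2) * (2*real m + 1) * fact (2*m))"
      by (simp only: Suc.IH) (simp add: algebra_simps)
    also have "(2*real m + 2) * (2*real m + 1) * fact (2*m) = (fact (2 * Suc m) :: real)"
      by (simp add: algebra_simps)
    finally show ?case .
  qed
  then show ?thesis using t by (simp add: field_simps)
qed

section \<open>Derivatives of the heat kernel\<close>

definition gaussian_tensor :: "real \<Rightarrow> nat \<Rightarrow> real \<Rightarrow> (nat \<Rightarrow> nat) \<Rightarrow> (nat \<Rightarrow> real) \<Rightarrow> real" where
  "gaussian_tensor t d c \<beta> x = c * (\<Prod>j<d. gaussian_deriv t (\<beta> j) (x j))"

lemma gaussian_tensor_split:
  assumes "i < d"
  shows "gaussian_tensor t d c \<beta> x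
    = c * (\<Prod>j\<in>{..<d}-{i}. gaussian_deriv t (\<beta> j) (x j)) * gaussian_deriv t (\<beta> i) (x i)"
  using assms unfolding gaussian_tensor_def by (subst prod.remove[of _ i]) (auto simp: mult_ac)

lemma pdx_gaussian_tensor:
  assumes t: "t > 0" and i: "i < d"
  shows "pdx i (gaussian_tensor t d c \<beta>) = gaussian_tensor t d c (\<beta>(i := Suc (\<beta> i)))"
proof
  fix x
  define R where "R = c * (\<Prod>j\<in>{..<d}-{i}. gaussian_deriv t (\<beta> j) (x j))"
  have other: "(\<Prod>j\<in>{..<d}-{i}. gaussian_deriv t (\<gamma> j) (y j)) = (\<Prod>j\<in>{..<d}-{i}. gaussian_deriv t (\<beta> j) (x j))"
    if "\<And>j. j \<noteq> i \<Longrightarrow> \<gamma> j = \<beta> j \<and> y j = x j" for \<gamma> y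
    using that by (intro prod.cong) auto
  have shift: "gaussian_tensor t d c \<beta> (x(i := x i + s)) = R * gaussian_deriv t (\<beta> i) (x i + s)" for s
    unfolding gaussian_tensor_split[OF i] R_def by (subst other) auto
  have "((\<lambda>s. R * gaussian_deriv t (\<beta> i) (x i + s)) has_real_derivative
          R * (gaussian_deriv t (Suc (\<beta> i)) (x i + 0) * 1)) (at 0)"
    by (intro DERIV_cmult DERIV_chain2[OF DERIV_gaussian_deriv[OF t]]) (auto intro!: derivative_eq_intros)
  then have "pdx i (gaussian_tensor t d c \<beta>) x = R * gaussian_deriv t (Suc (\<beta> i)) (x i)"
    unfolding pdx_def shift by (simp add: DERIV_imp_deriv)
  also have "\<dots> = gaussian_tensor t d c (\<beta>(i := Suc (\<beta> i))) x"
    unfolding gaussian_tensor_split[OF i] R_def by (subst other) auto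
  finally show "pdx i (gaussian_tensor t d c \<beta>) x = gaussian_tensor t d c (\<beta>(i := Suc (\<beta> i))) x" .
qed

lemma pdx_funpow_gaussian_tensor:
  assumes "t > 0" and "i < d"
  shows "(pdx i ^^ n) (gaussian_tensor t d c \<beta>) = gaussian_tensor t d c (\<beta>(i := \<beta> i + n))"
proof (induction n)
  case (Suc n)
  have "(pdx i ^^ Suc n) (gaussian_tensor t d c \<beta>) = pdx i (gaussian_tensor t d c (\<beta>(i := \<beta> i + n)))"
    by (simp only: funpow.simps comp_apply Suc.IH)
  also have "\<dots> = gaussian_tensor t d c (\<beta>(i := \<beta> i + Suc n))"
    by (simp add: pdx_gaussian_tensor[OF assms])
  finally show ?case .
qed simp

lemma Dmulti_gaussian_tensor:
  assumes t: "t > 0"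
  shows "m \<le> d \<Longrightarrow> Dmulti m \<alpha> (gaussian_tensor t d c \<beta>)
    = gaussian_tensor t d c (\<lambda>j. if j < m then \<beta> j + \<alpha> j else \<beta> j)"
proof (induction m)
  case (Suc m)
  then show ?case
    by (simp add: pdx_funpow_gaussian_tensor[OF t])
       (auto intro!: arg_cong[where f="gaussian_tensor t d c"])
qed simp

lemma heat_eq_gaussian_tensor:
  "(\<lambda>z. heat d z t) = gaussian_tensor t d ((4 * pi * t) powr (- real d / 2)) (\<lambda>_. 0)"
proof
  fix z
  have "exp (- sqnorm d z / (4 * t)) = exp (\<Sum>j<d. - ((z j)^2) / (4*t))"
    unfolding sqnorm_def by (simp add: sum_negf sum_divide_distrib)
  then show "heat d z t = gaussian_tensor t d ((4 * pi * t) powr (- real d / 2)) (\<lambda>_. 0) z"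
    unfolding heat_def gaussian_tensor_def by (simp add: exp_sum gaussian_deriv_def gaussian_def)
qed

lemma Dmulti_heat:
  "t > 0 \<Longrightarrow> Dmulti d \<alpha> (\<lambda>z. heat d z t) = gaussian_tensor t d ((4 * pi * t) powr (- real d / 2)) \<alpha>"
  unfolding heat_eq_gaussian_tensor
  by (subst Dmulti_gaussian_tensor) (auto simp: gaussian_tensor_def intro!: ext prod.cong)

section \<open>Moments of the initial datum\<close>

definition gaussian_moment :: "real \<Rightarrow> nat \<Rightarrow> real" where
  "gaussian_moment t0 n = integral\<^sup>L lborel (\<lambda>y. y^n * gaussian t0 y)"

lemma gaussian_eq_normal_density:
  assumes "t0 > 0"
  shows "y^n * gaussian t0 y = sqrt (4*pi*t0) * (normal_density 0 (sqrt (2*t0)) y * (y - 0)^n)"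
proof -
  have "(sqrt (2*t0))\<^sup>2 = 2*t0" and "sqrt (4*pi*t0) > 0" using assms by simp_all
  moreover have "2 * pi * (2 * t0) = 4*pi*t0" by simp
  ultimately show ?thesis using assms by (simp add: normal_density_def gaussian_def field_simps)
qed

lemma has_bochner_integral_gaussian_moment_even:
  assumes t0: "t0 > 0"
  shows "has_bochner_integral lborel (\<lambda>y. y^(2*m) * gaussian t0 y)
    (sqrt (4*pi*t0) * (fact (2*m) * t0^m / fact m))"
proof -
  have "sqrt (4*pi*t0) * (fact (2*m) / ((2 / (sqrt (2*t0))\<^sup>2)^m * fact m))
      = sqrt (4*pi*t0) * (fact (2*m) * t0^m / fact m)"
    using t0 by (simp add: power_one_over field_simps)
  moreover have "has_bochner_integral lborel (\<lambda>y. sqrt (4*pi*t0) * (normal_density 0 (sqrt (2*t0)) y * (y - 0)^(2*m)))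
      (sqrt (4*pi*t0) * (fact (2*m) / ((2 / (sqrt (2*t0))\<^sup>2)^m * fact m)))"
    using t0 by (intro has_bochner_integral_mult_right normal_moment_even) simp
  ultimately show ?thesis
    unfolding gaussian_eq_normal_density[OF t0] by simp
qed

lemma has_bochner_integral_gaussian_moment_odd:
  assumes t0: "t0 > 0"
  shows "has_bochner_integral lborel (\<lambda>y. y^(2*m + 1) * gaussian t0 y) 0"
proof -
  have "has_bochner_integral lborel (\<lambda>y. sqrt (4*pi*t0) * (normal_density 0 (sqrt (2*t0)) y * (y - 0)^(2*m + 1)))
      (sqrt (4*pi*t0) * 0)"
    using t0 by (intro has_bochner_integral_mult_right normal_moment_odd) simp
  then show ?thesis
    unfolding gaussian_eq_normal_density[OF t0] by simp
qed

lemma integrable_gaussian_moment: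
  assumes "t0 > 0"
  shows "integrable lborel (\<lambda>y. y^n * gaussian t0 y)"
proof (cases "even n")
  case True
  then obtain m where "n = 2*m" by blast
  then show ?thesis using integrable.intros[OF has_bochner_integral_gaussian_moment_even[OF assms]] by simp
next
  case False
  then obtain m where "n = 2*m + 1" using oddE by blast
  then show ?thesis using integrable.intros[OF has_bochner_integral_gaussian_moment_odd[OF assms]] by simp
qed

lemma gaussian_moment_even:
  "t0 > 0 \<Longrightarrow> gaussian_moment t0 (2*m) = sqrt (4*pi*t0) * (fact (2*m) * t0^m / fact m)"
  unfolding gaussian_moment_def using has_bochner_integral_gaussian_moment_even has_bochner_integral_integral_eq by blast

lemma gaussian_moment_odd: "t0 > 0 \<Longrightarrow> gaussian_moment t0 (2*m + 1) = 0"
  unfolding gaussian_moment_def using has_bochner_integral_gaussian_moment_odd has_bochner_integral_integral_eq by blast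

interpretation lborel_product: product_sigma_finite "\<lambda>_::nat. lborel::real measure"
  by (simp add: product_sigma_finite_def sigma_finite_lborel)

lemma integral_mpow_u0:
  assumes t0: "t0 > 0"
  shows "integral\<^sup>L (Rd d) (\<lambda>y. mpow d y \<alpha> * u0 d C t0 y) = C * (\<Prod>i<d. gaussian_moment t0 (\<alpha> i))"
proof -
  have factor: "mpow d y \<alpha> * u0 d C t0 y = C * (\<Prod>i<d. (y i)^(\<alpha> i) * gaussian t0 (y i))" for y
  proof -
    have "exp (- sqnorm d y / (4 * t0)) = exp (\<Sum>j<d. - ((y j)^2) / (4*t0))"
      unfolding sqnorm_def by (simp add: sum_negf sum_divide_distrib)
    then show ?thesis
      unfolding mpow_def u0_def gaussian_def by (simp add: exp_sum prod.distrib)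
  qed
  show ?thesis
    unfolding factor Rd_def gaussian_moment_def
    using lborel_product.product_integral_prod[of "{..<d}" "\<lambda>i y. y^(\<alpha> i) * gaussian t0 y"]
      integrable_gaussian_moment[OF t0]
    by simp
qed

lemma finite_multi_idx: "finite (multi_idx d k)"
proof (rule finite_subset)
  show "multi_idx d k \<subseteq> {f. \<forall>x. (x \<in> {..<d} \<longrightarrow> f x \<in> {..k}) \<and> (x \<notin> {..<d} \<longrightarrow> f x = 0)}"
  proof (intro subsetI CollectI allI conjI impI)
    fix f x assume f: "f \<in> multi_idx d k"
    { assume "x \<in> {..<d}"
      then have "f x \<le> mabs d f" unfolding mabs_def by (intro member_le_sum) auto
      then show "f x \<in> {..k}" using f by (auto simp: multi_idx_def) }
    { assume "x \<notin> {..<d}" then show "f x = 0" using f by (auto simp: multi_idx_def) }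
  qed
qed (intro finite_set_of_finite_funs; simp)

definition multi_idx_prod_sum :: "(nat \<Rightarrow> real) \<Rightarrow> nat \<Rightarrow> nat \<Rightarrow> real" where
  "multi_idx_prod_sum f d k = (\<Sum>\<alpha>\<in>multi_idx d k. \<Prod>i<d. f (\<alpha> i))"

lemma multi_idx_prod_sum_0: "multi_idx_prod_sum f 0 k = 1"
proof -
  have "multi_idx 0 k = {\<lambda>_. 0}" by (auto simp: multi_idx_def mabs_def)
  then show ?thesis by (simp add: multi_idx_prod_sum_def)
qed

lemma multi_idx_prod_sum_Suc:
  "multi_idx_prod_sum f (Suc d) k = (\<Sum>j\<le>k. f j * multi_idx_prod_sum f d (k - j))"
proof -
  have mabs_upd: "mabs d (\<alpha>(d := j)) = mabs d \<alpha>" for \<alpha> j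
    unfolding mabs_def by (intro sum.cong) auto
  have "(\<Sum>j\<le>k. f j * multi_idx_prod_sum f d (k - j))
      = (\<Sum>(j,\<alpha>)\<in>Sigma {..k} (\<lambda>j. multi_idx d (k - j)). f j * (\<Prod>i<d. f (\<alpha> i)))"
    by (simp add: multi_idx_prod_sum_def sum_distrib_left sum.Sigma finite_multi_idx)
  also have "\<dots> = (\<Sum>\<beta>\<in>multi_idx (Suc d) k. \<Prod>i<Suc d. f (\<beta> i))"
    apply (rule sum.reindex_bij_witness[where i="\<lambda>\<beta>. (\<beta> d, \<beta>(d := 0))" and j="\<lambda>(j,\<alpha>). \<alpha>(d := j)"])
    subgoal by (auto simp: multi_idx_def)
    subgoal for a using mabs_upd[of "snd a" "fst a"] by (auto simp: multi_idx_def mabs_def)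
    subgoal by auto
    subgoal for b using mabs_upd[of b 0] by (auto simp: multi_idx_def mabs_def)
    subgoal for a by (auto intro!: prod.cong)
    done
  finally show ?thesis by (simp add: multi_idx_prod_sum_def)
qed

section \<open>Coefficients of the binomial series of \<open>(1 - x)\<^sup>-\<^sup>d\<^sup>/\<^sup>2\<close>\<close>

definition negbinom :: "nat \<Rightarrow> nat \<Rightarrow> real" where
  "negbinom d s = (-1)^s * ((- real d / 2) gchoose s)"

lemma negbinom_0_left: "negbinom 0 s = (if s = 0 then 1 else 0)"
  by (simp add: negbinom_def gbinomial_0_left)

lemma negbinom_0_right [simp]: "negbinom d 0 = 1"
  by (simp add: negbinom_def)

lemma negbinom_Suc_left: "negbinom (Suc d) s = (\<Sum>i\<le>s. negbinom 1 i * negbinom d (s - i))"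
proof -
  have "(\<Sum>i\<le>s. negbinom 1 i * negbinom d (s - i))
      = (-1)^s * (\<Sum>i\<le>s. ((-1/2) gchoose i) * ((- real d / 2) gchoose (s - i)))"
    unfolding sum_distrib_left
  proof (rule sum.cong)
    fix i assume "i \<in> {..s}"
    then have "(-1::real)^i * (-1)^(s - i) = (-1)^s" by (simp flip: power_add)
    then show "negbinom 1 i * negbinom d (s - i) = (-1)^s * (((-1/2) gchoose i) * ((- real d / 2) gchoose (s - i)))"
      unfolding negbinom_def by (simp add: ac_simps)
  qed simp
  also have "\<dots> = (-1)^s * ((-1/2 + - real d / 2) gchoose s)"
    using gbinomial_Vandermonde[of "-1/2::real" "- real d / 2" s] by (simp add: atMost_atLeast0)
  also have "-1/2 + - real d / 2 = - real (Suc d) / 2"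
    by simp
  finally show ?thesis by (simp add: negbinom_def)
qed

lemma negbinom_Suc: "negbinom d (Suc s) = negbinom d s * ((real d / 2 + real s) / (real s + 1))"
proof -
  have "(real s + 1) * negbinom d (Suc s) = (-1)^Suc s * ((real s + 1) * ((- real d / 2) gchoose Suc s))"
    by (simp add: negbinom_def)
  also have "(real s + 1) * ((- real d / 2) gchoose Suc s) = (- real d / 2 - real s) * ((- real d / 2) gchoose s)"
    using gbinomial_absorption[of s "- real d / 2"] gbinomial_absorb_comp[of "- real d / 2" s]
    by (metis add.commute of_nat_Suc)
  also have "(-1)^Suc s * ((- real d / 2 - real s) * ((- real d / 2) gchoose s)) = negbinom d s * (real d / 2 + real s)"
    by (simp add: negbinom_def algebra_simps)
  finally show ?thesis by (simp add: field_simps)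
qed

lemma negbinom_nonneg: "negbinom d s \<ge> 0"
  by (induction s) (auto simp: negbinom_Suc)

lemma negbinom_mono: "d \<ge> 2 \<Longrightarrow> negbinom d s \<le> negbinom d (Suc s)"
  using mult_left_mono[of 1 "(real d / 2 + real s) / (real s + 1)" "negbinom d s"] negbinom_nonneg[of d s]
  by (simp add: negbinom_Suc field_simps)

lemma negbinom_ge_1: "d \<ge> 2 \<Longrightarrow> negbinom d s \<ge> 1"
  by (induction s) (auto intro: order_trans negbinom_mono)

lemma negbinom_1: "negbinom 1 m = fact (2*m) / (fact m ^ 2 * 4^m)"
proof -
  have "negbinom 1 m * (fact m ^ 2 * 4^m) = fact (2*m)"
  proof (induction m)
    case (Suc m)
    have "negbinom 1 (Suc m) * (fact (Suc m) ^ 2 * 4^Suc m)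
        = (negbinom 1 m * (fact m ^ 2 * 4^m)) * ((2*real m + 2) * (2*real m + 1))"
      by (simp add: negbinom_Suc field_simps power2_eq_square)
    also have "\<dots> = fact (2 * Suc m)"
      by (simp only: Suc.IH) (simp add: algebra_simps)
    finally show ?case .
  qed simp
  then show ?thesis by (simp add: field_simps)
qed

lemma negbinom_1_ge: "s \<ge> 1 \<Longrightarrow> negbinom 1 s \<ge> sqrt (1 / real s) / 2"
proof -
  assume s: "s \<ge> 1"
  \<comment> \<open>the step uses \<open>(s + 1/2)\<^sup>2 \<ge> s (s + 1)\<close>\<close>
  have "4 * real s * (negbinom 1 s)^2 \<ge> 1"
    using s
  proof (induction s rule: dec_induct)
    case base
    have "negbinom 1 1 = 1/2" using negbinom_Suc[of 1 0] by simp
    then show ?case by (simp only: power2_eq_square)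
  next
    case (step s)
    have s1: "real s \<ge> 1" using step.hyps by simp
    have ratio: "negbinom 1 (Suc s) * (real s + 1) = negbinom 1 s * (1/2 + real s)"
      using negbinom_Suc[of 1 s] by (simp add: field_simps)
    have "(real s + 1) * (4 * real (Suc s) * (negbinom 1 (Suc s))^2) = 4 * (negbinom 1 (Suc s) * (real s + 1))^2"
      by (simp add: power2_eq_square algebra_simps)
    also have "\<dots> = (4 * real s * (negbinom 1 s)^2) * ((1/2 + real s)^2 / real s)"
      unfolding ratio using s1 by (simp add: power2_eq_square field_simps)
    also have "\<dots> \<ge> 1 * ((1/2 + real s)^2 / real s)"
      using step.IH s1 by (intro mult_right_mono) auto
    also have "1 * ((1/2 + real s)^2 / real s) \<ge> (real s + 1) * 1"
      using s1 by (simp add: field_simps power2_eq_square)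
    finally show ?case using s1 by (simp only: mult_le_cancel_left_pos)
  qed
  then have "sqrt (1 / (4 * real s)) \<le> sqrt ((negbinom 1 s)^2)"
    using s by (intro real_sqrt_le_mono) (simp add: field_simps)
  then show ?thesis
    using negbinom_nonneg[of 1 s] by (simp add: real_sqrt_divide real_sqrt_mult)
qed

definition binom_partial_sum :: "nat \<Rightarrow> real \<Rightarrow> nat \<Rightarrow> real" where
  "binom_partial_sum d r n = (\<Sum>s\<le>n. (-r)^s * negbinom d s)"

definition even_coeff :: "real \<Rightarrow> real \<Rightarrow> nat \<Rightarrow> real" where
  "even_coeff c r n = (if even n then c * (-r)^(n div 2) * negbinom 1 (n div 2) else 0)"

lemma sum_atMost_even:
  fixes G :: "nat \<Rightarrow> real"
  assumes "\<And>m. G (2*m + 1) = 0"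
  shows "(\<Sum>j\<le>k. G j) = (\<Sum>i\<le>k div 2. G (2*i))"
proof (induction k)
  case (Suc k)
  then show ?case
    using assms[of "k div 2"] by (cases "even k") (auto elim: oddE)
qed simp

lemma negbinom_Suc_left_power:
  "(\<Sum>i\<le>u. (-r)^i * negbinom 1 i * ((-r)^(u - i) * negbinom d (u - i))) = (-r)^u * negbinom (Suc d) u"
proof -
  have "(-r)^i * negbinom 1 i * ((-r)^(u - i) * negbinom d (u - i)) = (-r)^u * (negbinom 1 i * negbinom d (u - i))"
    if "i \<le> u" for i
    using that by (simp add: mult_ac flip: power_add)
  then show ?thesis
    unfolding negbinom_Suc_left sum_distrib_left by (intro sum.cong) auto
qed

lemma multi_idx_prod_sum_even_coeff:
  "multi_idx_prod_sum (even_coeff c r) d k = c^d * binom_partial_sum d r (k div 2)"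
proof (induction d arbitrary: k)
  case 0
  have "(\<Sum>s\<le>k div 2. (-r)^s * negbinom 0 s) = (\<Sum>s\<in>{0}. (-r)^s * negbinom 0 s)"
    by (rule sum.mono_neutral_right) (auto simp: negbinom_0_left)
  then show ?case by (simp add: multi_idx_prod_sum_0 binom_partial_sum_def)
next
  case (Suc d)
  let ?n = "k div 2"
  have "multi_idx_prod_sum (even_coeff c r) (Suc d) k
      = (\<Sum>j\<le>k. even_coeff c r j * (c^d * binom_partial_sum d r ((k - j) div 2)))"
    by (simp add: multi_idx_prod_sum_Suc Suc.IH)
  also have "\<dots> = (\<Sum>i\<le>?n. even_coeff c r (2*i) * (c^d * binom_partial_sum d r ((k - 2*i) div 2)))"
    by (rule sum_atMost_even) (simp add: even_coeff_def)
  also have "\<dots> = (\<Sum>i\<le>?n. \<Sum>s\<le>?n - i. c^Suc d * ((-r)^i * negbinom 1 i * ((-r)^s * negbinom d s)))"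
  proof (rule sum.cong)
    fix i assume "i \<in> {..?n}"
    then have "(k - 2*i) div 2 = ?n - i" by auto
    then show "even_coeff c r (2*i) * (c^d * binom_partial_sum d r ((k - 2*i) div 2))
        = (\<Sum>s\<le>?n - i. c^Suc d * ((-r)^i * negbinom 1 i * ((-r)^s * negbinom d s)))"
      by (simp add: even_coeff_def binom_partial_sum_def sum_distrib_left mult_ac)
  qed simp
  also have "\<dots> = (\<Sum>(i,s)\<in>{(i,j). i + j \<le> ?n}. c^Suc d * ((-r)^i * negbinom 1 i * ((-r)^s * negbinom d s)))"
    by (subst sum.Sigma) (auto intro!: sum.cong)
  also have "\<dots> = (\<Sum>u\<le>?n. \<Sum>i\<le>u. c^Suc d * ((-r)^i * negbinom 1 i * ((-r)^(u - i) * negbinom d (u - i))))"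
    by (rule sum.triangle_reindex_eq)
  also have "\<dots> = (\<Sum>u\<le>?n. c^Suc d * ((-r)^u * negbinom (Suc d) u))"
    by (simp only: sum_distrib_left[symmetric] negbinom_Suc_left_power)
  also have "\<dots> = c^Suc d * binom_partial_sum (Suc d) r ?n"
    by (simp add: binom_partial_sum_def sum_distrib_left)
  finally show ?case .
qed

definition uk_factor :: "real \<Rightarrow> real \<Rightarrow> nat \<Rightarrow> real \<Rightarrow> real" where
  "uk_factor t0 t n y = (-1)^n / fact n * gaussian_moment t0 n * gaussian_deriv t n y"

lemma uk_eq_sum_prod:
  assumes t0: "t0 > 0" and t: "t > 0"
  shows "uk d C t0 k x t = C * (4 * pi * t) powr (- real d / 2) *
     (\<Sum>\<alpha>\<in>multi_idx d k. \<Prod>i<d. uk_factor t0 t (\<alpha> i) (x i))"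
proof -
  have "(-1) ^ mabs d \<alpha> / real (mfact d \<alpha>) * integral\<^sup>L (Rd d) (\<lambda>y. mpow d y \<alpha> * u0 d C t0 y) *
          Dmulti d \<alpha> (\<lambda>z. heat d z t) x
      = C * (4 * pi * t) powr (- real d / 2) * (\<Prod>i<d. uk_factor t0 t (\<alpha> i) (x i))" for \<alpha>
    unfolding integral_mpow_u0[OF t0] Dmulti_heat[OF t] gaussian_tensor_def uk_factor_def
      mabs_def mfact_def power_sum
    by (simp add: prod.distrib prod_dividef)
  then show ?thesis
    unfolding uk_def by (simp add: sum_distrib_left)
qed

lemma uk_factor_0:
  assumes t0: "t0 > 0" and t: "t > 0"
  shows "uk_factor t0 t n 0 = even_coeff (sqrt (4*pi*t0)) (t0/t) n"
proof (cases "even n")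
  case True
  then obtain m where m: "n = 2*m" by blast
  have "uk_factor t0 t n 0 = 1 / fact (2*m) * (sqrt (4*pi*t0) * (fact (2*m) * t0^m / fact m)) *
      ((-1)^m * fact (2*m) / (fact m * (4*t)^m))"
    unfolding uk_factor_def m by (simp add: gaussian_moment_even[OF t0] gaussian_deriv_even_0[OF t])
  also have "\<dots> = sqrt (4*pi*t0) * (-(t0/t))^m * (fact (2*m) / (fact m ^ 2 * 4^m))"
  proof -
    have "(-(t0/t))^m = (-1)^m * (t0^m / t^m)"
      by (simp add: power_minus' power_divide)
    moreover have "(4*t)^m = 4^m * t^m"
      by (simp add: power_mult_distrib)
    ultimately show ?thesis
      using t by (simp add: field_simps power2_eq_square)
  qed
  finally show ?thesis
    using m negbinom_1[of m] by (simp add: even_coeff_def)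
next
  case False
  then obtain m where "n = 2*m + 1" using oddE by blast
  then show ?thesis using gaussian_moment_odd[OF t0, of m] by (simp add: uk_factor_def even_coeff_def)
qed

lemma abs_uk_at_origin:
  assumes "C > 0" and t0: "t0 > 0" and t: "t > 0"
  obtains P where "P > 0"
    and "\<And>k. \<bar>uk d C t0 k (\<lambda>_. 0) t\<bar> = P * \<bar>binom_partial_sum d (t0/t) (k div 2)\<bar>"
proof -
  define P where "P = C * (4 * pi * t) powr (- real d / 2) * sqrt (4*pi*t0) ^ d"
  have "P > 0"
    using assms by (simp add: P_def)
  moreover have "\<bar>uk d C t0 k (\<lambda>_. 0) t\<bar> = P * \<bar>binom_partial_sum d (t0/t) (k div 2)\<bar>" for k
    unfolding uk_eq_sum_prod[OF t0 t] uk_factor_0[OF t0 t] multi_idx_prod_sum_def[symmetric]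
      multi_idx_prod_sum_even_coeff
    using \<open>C > 0\<close> t0 by (simp add: P_def abs_mult mult.assoc)
  ultimately show thesis
    by (rule that)
qed

section \<open>Growth of the partial sums\<close>

lemma abs_alternating_sum_ge:
  fixes a :: "nat \<Rightarrow> real"
  assumes mono: "\<And>m. N \<le> m \<Longrightarrow> a m \<le> a (Suc m)" and nonneg: "\<And>m. 0 \<le> a m" and "N \<le> n"
  shows "a (Suc n) - a n - \<bar>\<Sum>s<N. (-1)^s * a s\<bar> \<le> \<bar>\<Sum>s\<le>Suc n. (-1)^s * a s\<bar>"
proof -
  define T where "T m = (-1)^m * ((\<Sum>s\<le>m. (-1)^s * a s) - (\<Sum>s<N. (-1)^s * a s))" for m
  have sq: "(-1::real)^m * (-1)^m = 1" for m
    by (simp flip: power_mult_distrib)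
  have T_Suc: "T (Suc m) = a (Suc m) - T m" for m
    using sq[of "Suc m"] by (simp add: T_def algebra_simps)
  have T_bounds: "0 \<le> T m \<and> T m \<le> a m" if "N \<le> m" for m
    using that
  proof (induction m rule: dec_induct)
    case base
    then show ?case using sq[of N] nonneg[of N] by (simp add: T_def lessThan_Suc_atMost[symmetric])
  next
    case (step m)
    then show ?case using T_Suc[of m] mono[of m] nonneg[of "Suc m"] by linarith
  qed
  have "a (Suc n) - a n \<le> T (Suc n)"
    using T_Suc[of n] T_bounds[OF \<open>N \<le> n\<close>] by linarith
  also have "\<dots> \<le> \<bar>T (Suc n)\<bar>"
    by (rule abs_ge_self)
  also have "\<dots> = \<bar>(\<Sum>s\<le>Suc n. (-1)^s * a s) - (\<Sum>s<N. (-1)^s * a s)\<bar>"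
    unfolding T_def abs_mult by (simp del: sum.atMost_Suc)
  finally show ?thesis
    using abs_triangle_ineq4[of "\<Sum>s\<le>Suc n. (-1)^s * a s" "\<Sum>s<N. (-1)^s * a s"] by linarith
qed

lemma binom_partial_sum_alt: "binom_partial_sum d r n = (\<Sum>s\<le>n. (-1)^s * (r^s * negbinom d s))"
  unfolding binom_partial_sum_def by (simp add: power_minus' mult.assoc)

lemma binom_partial_sum_ge:
  assumes d: "d \<ge> 2" and r: "r > 1"
  shows "(r - 1) * r powr (real n - 1) \<le> \<bar>binom_partial_sum d r n\<bar>"
proof (cases n)
  case 0
  have "(r - 1) * r powr (-1) \<le> 1" using r by (simp add: powr_minus field_simps)
  then show ?thesis using 0 by (simp add: binom_partial_sum_def)
next
  case (Suc m)
  have mono: "r^s * negbinom d s \<le> r^Suc s * negbinom d (Suc s)" for s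
    using negbinom_mono[OF d, of s] negbinom_nonneg[of d s] r
    by (intro mult_mono) auto
  have "1 * (r - 1) \<le> negbinom d m * (r - 1)"
    using negbinom_ge_1[OF d, of m] r by (intro mult_right_mono) auto
  moreover have "negbinom d m * r \<le> negbinom d (Suc m) * r"
    using negbinom_mono[OF d, of m] r by simp
  ultimately have "r - 1 \<le> negbinom d (Suc m) * r - negbinom d m"
    by (simp add: algebra_simps)
  then have "r^m * (r - 1) \<le> r^m * (r * negbinom d (Suc m) - negbinom d m)"
    using r by (intro mult_left_mono) (auto simp: mult.commute)
  also have "\<dots> \<le> \<bar>binom_partial_sum d r (Suc m)\<bar>"
    using abs_alternating_sum_ge[where N=0 and a="\<lambda>s. r^s * negbinom d s" and n=m] mono
      negbinom_nonneg r unfolding binom_partial_sum_alt by (simp add: algebra_simps)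
  finally show ?thesis
    using Suc r by (simp add: powr_realpow mult.commute)
qed

lemma filterlim_power_mult_sqrt_inverse:
  assumes r: "r > 1"
  shows "filterlim (\<lambda>s. r^s * sqrt (1 / real s)) at_top sequentially"
proof (rule filterlim_at_top_mono)
  show "filterlim (\<lambda>s. (sqrt r - 1)^2 * real s) at_top sequentially"
    using r by (intro filterlim_tendsto_pos_mult_at_top[OF tendsto_const] filterlim_real_sequentially) simp
  show "\<forall>\<^sub>F s in sequentially. (sqrt r - 1)^2 * real s \<le> r^s * sqrt (1 / real s)"
    using eventually_ge_at_top[of 1]
  proof (rule eventually_mono)
    fix s :: nat assume s: "1 \<le> s"
    have "real s * (sqrt r - 1) \<le> sqrt r ^ s"
      using Bernoulli_inequality[of "sqrt r - 1" s] r by simp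
    then have "(real s * (sqrt r - 1))^2 \<le> (sqrt r ^ s)^2"
      using r by (intro power_mono) auto
    also have "\<dots> = (sqrt r ^ 2)^s"
      by (metis power_mult mult.commute)
    also have "\<dots> = r^s"
      using r by simp
    finally have "real s * (sqrt r - 1)^2 \<le> r^s * (1 / real s)"
      using s by (simp add: field_simps power2_eq_square)
    also have "\<dots> \<le> r^s * sqrt (1 / real s)"
      using s r by (intro mult_left_mono real_le_rsqrt) (auto simp: power2_eq_square field_simps)
    finally show "(sqrt r - 1)^2 * real s \<le> r^s * sqrt (1 / real s)"
      by (simp add: mult.commute)
  qed
qed

lemma abs_alternating_sum_eventually_ge:
  fixes a :: "nat \<Rightarrow> real"
  assumes nonneg: "\<And>m. 0 \<le> a m" and e: "e > 0"
    and step: "\<And>m. N \<le> m \<Longrightarrow> e * a m \<le> a (Suc m) - a m"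
    and lim: "filterlim a at_top sequentially"
  shows "\<forall>\<^sub>F n in sequentially. e / 2 * a n \<le> \<bar>\<Sum>s\<le>Suc n. (-1)^s * a s\<bar>"
proof -
  define K where "K = \<bar>\<Sum>s<N. (-1)^s * a s\<bar>"
  have mono: "a m \<le> a (Suc m)" if "N \<le> m" for m
    using step[OF that] mult_nonneg_nonneg[of e "a m"] nonneg[of m] e by linarith
  have "\<forall>\<^sub>F n in sequentially. 2 * K / e \<le> a n"
    using lim unfolding filterlim_at_top by blast
  then have "\<forall>\<^sub>F n in sequentially. 2 * K / e \<le> a n \<and> N \<le> n"
    by (intro eventually_conj eventually_ge_at_top)
  then show ?thesis
  proof (rule eventually_mono, elim conjE)
    fix n assume big: "2 * K / e \<le> a n" and n: "N \<le> n"
    have "2 * K \<le> e * a n"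
      using big e by (simp add: field_simps)
    moreover have "a (Suc n) - a n - K \<le> \<bar>\<Sum>s\<le>Suc n. (-1)^s * a s\<bar>"
      using abs_alternating_sum_ge[of N a n, OF mono nonneg n] by (simp add: K_def)
    ultimately show "e / 2 * a n \<le> \<bar>\<Sum>s\<le>Suc n. (-1)^s * a s\<bar>"
      using step[OF n] by linarith
  qed
qed

lemma power_negbinom_1_increment:
  assumes r: "r > 1" and m: "1 \<le> real m * (r - 1)"
  shows "(r - 1) / 4 * (r^m * negbinom 1 m) \<le> r^Suc m * negbinom 1 (Suc m) - r^m * negbinom 1 m"
proof -
  have "(r - 1) / 4 \<le> r * ((1/2 + real m) / (real m + 1)) - 1"
    using m r by (simp add: field_simps)
  moreover have "r^Suc m * negbinom 1 (Suc m) - r^m * negbinom 1 m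
      = r^m * negbinom 1 m * (r * ((1/2 + real m) / (real m + 1)) - 1)"
    by (simp add: negbinom_Suc algebra_simps)
  moreover have "0 \<le> r^m * negbinom 1 m"
    using r negbinom_nonneg[of 1 m] by simp
  ultimately show ?thesis
    by (metis mult.commute mult_left_mono)
qed

lemma binom_partial_sum_1_ge:
  assumes r: "r > 1"
  shows "\<exists>B>0. \<forall>\<^sub>F n in sequentially. B * r^n * sqrt (1 / (real n - 1)) \<le> \<bar>binom_partial_sum 1 r n\<bar>"
proof -
  let ?a = "\<lambda>s. r^s * negbinom 1 s"
  obtain N where N: "\<And>m. N \<le> m \<Longrightarrow> 1 / (r - 1) \<le> real m"
    using filterlim_real_sequentially unfolding filterlim_at_top eventually_sequentially by blast
  have lower: "1/2 * (r^m * sqrt (1 / real m)) \<le> ?a m" if "1 \<le> m" for m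
    using negbinom_1_ge[OF that] r mult_left_mono[of _ _ "r^m"] by simp
  have "filterlim ?a at_top sequentially"
  proof (rule filterlim_at_top_mono)
    show "filterlim (\<lambda>m. 1/2 * (r^m * sqrt (1 / real m))) at_top sequentially"
      by (intro filterlim_tendsto_pos_mult_at_top[OF tendsto_const _ filterlim_power_mult_sqrt_inverse[OF r]]) simp
    show "\<forall>\<^sub>F m in sequentially. 1/2 * (r^m * sqrt (1 / real m)) \<le> ?a m"
      using eventually_ge_at_top[of 1] by (rule eventually_mono) (rule lower)
  qed
  then have "\<forall>\<^sub>F s in sequentially. (r - 1) / 4 / 2 * ?a s \<le> \<bar>binom_partial_sum 1 r (Suc s)\<bar>"
    unfolding binom_partial_sum_alt using r negbinom_nonneg N
    by (intro abs_alternating_sum_eventually_ge[where N=N] power_negbinom_1_increment) (auto simp: field_simps)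
  then have "\<forall>\<^sub>F s in sequentially. (r - 1) / (16 * r) * r^Suc s * sqrt (1 / (real (Suc s) - 1))
      \<le> \<bar>binom_partial_sum 1 r (Suc s)\<bar>"
    using eventually_ge_at_top[of 1]
  proof (rule eventually_elim2)
    fix s :: nat assume "(r - 1) / 4 / 2 * ?a s \<le> \<bar>binom_partial_sum 1 r (Suc s)\<bar>" "1 \<le> s"
    moreover have "(r - 1) / (16 * r) * r^Suc s * sqrt (1 / (real (Suc s) - 1))
        = (r - 1) / 8 * (1/2 * (r^s * sqrt (1 / real s)))"
      using r by (simp add: field_simps)
    moreover have "(r - 1) / 8 * (1/2 * (r^s * sqrt (1 / real s))) \<le> (r - 1) / 8 * ?a s"
      using lower[OF \<open>1 \<le> s\<close>] r by (intro mult_left_mono) auto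
    ultimately show "(r - 1) / (16 * r) * r^Suc s * sqrt (1 / (real (Suc s) - 1))
        \<le> \<bar>binom_partial_sum 1 r (Suc s)\<bar>"
      by simp
  qed
  then have "\<forall>\<^sub>F n in sequentially. (r - 1) / (16 * r) * r^n * sqrt (1 / (real n - 1))
      \<le> \<bar>binom_partial_sum 1 r n\<bar>"
    by (rule eventually_sequentially_Suc[THEN iffD1])
  moreover have "(r - 1) / (16 * r) > 0"
    using r by simp
  ultimately show ?thesis
    by (intro exI[of _ "(r - 1) / (16 * r)"] conjI)
qed

lemma binom_partial_sum_unbounded:
  assumes d: "d \<ge> 1" and r: "r > 1"
  shows "filterlim (\<lambda>n. \<bar>binom_partial_sum d r n\<bar>) at_top sequentially"
proof (cases "d = 1")
  case True
  obtain B where B: "B > 0"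
    and lower: "\<forall>\<^sub>F n in sequentially. B * r^n * sqrt (1 / (real n - 1)) \<le> \<bar>binom_partial_sum 1 r n\<bar>"
    using binom_partial_sum_1_ge[OF r] by blast
  have "\<forall>\<^sub>F n in sequentially. B * (r^n * sqrt (1 / real n)) \<le> \<bar>binom_partial_sum 1 r n\<bar>"
    using lower eventually_ge_at_top[of 2]
  proof (rule eventually_elim2)
    fix n :: nat assume "B * r^n * sqrt (1 / (real n - 1)) \<le> \<bar>binom_partial_sum 1 r n\<bar>" "2 \<le> n"
    moreover have "sqrt (1 / real n) \<le> sqrt (1 / (real n - 1))"
      using \<open>2 \<le> n\<close> by (intro real_sqrt_le_mono divide_left_mono) auto
    then have "B * (r^n * sqrt (1 / real n)) \<le> B * (r^n * sqrt (1 / (real n - 1)))"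
      using B r by (intro mult_left_mono) auto
    ultimately show "B * (r^n * sqrt (1 / real n)) \<le> \<bar>binom_partial_sum 1 r n\<bar>"
      by (simp add: mult.assoc)
  qed
  moreover have "filterlim (\<lambda>n. B * (r^n * sqrt (1 / real n))) at_top sequentially"
    using B by (intro filterlim_tendsto_pos_mult_at_top[OF tendsto_const _ filterlim_power_mult_sqrt_inverse[OF r]])
  ultimately show ?thesis
    using True by (auto intro: filterlim_at_top_mono[rotated])
next
  case False
  then have d2: "d \<ge> 2" using d by simp
  have "\<forall>\<^sub>F n in sequentially. (r - 1) / r * (r^n * sqrt (1 / real n)) \<le> \<bar>binom_partial_sum d r n\<bar>"
    using eventually_ge_at_top[of 1]
  proof (rule eventually_mono)
    fix n :: nat assume "1 \<le> n"
    then have "sqrt (1 / real n) \<le> 1" by simp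
    then have "(r - 1) / r * (r^n * sqrt (1 / real n)) \<le> (r - 1) / r * r^n"
      using r by (intro mult_left_mono mult_left_le) auto
    also have "\<dots> = (r - 1) * r powr (real n - 1)"
      using r by (simp add: powr_diff powr_realpow)
    also have "\<dots> \<le> \<bar>binom_partial_sum d r n\<bar>"
      by (rule binom_partial_sum_ge[OF d2 r])
    finally show "(r - 1) / r * (r^n * sqrt (1 / real n)) \<le> \<bar>binom_partial_sum d r n\<bar>" .
  qed
  moreover have "filterlim (\<lambda>n. (r - 1) / r * (r^n * sqrt (1 / real n))) at_top sequentially"
    using r by (intro filterlim_tendsto_pos_mult_at_top[OF tendsto_const _ filterlim_power_mult_sqrt_inverse[OF r]]) simp
  ultimately show ?thesis
    by (rule filterlim_at_top_mono[rotated])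
qed

section \<open>The essential supremum dominates the value at the origin\<close>

lemma eventually_coordinate_filter_box:
  fixes P :: "(nat \<Rightarrow> real) \<Rightarrow> bool"
  assumes "eventually P (INF i\<in>{..<d}. filtercomap (\<lambda>x. x i) (nhds (0::real)))"
  shows "\<exists>\<delta>>0. \<forall>x. (\<forall>i<d. \<bar>x i\<bar> < \<delta>) \<longrightarrow> P x"
proof -
  obtain Q where Q: "\<forall>i\<in>{..<d}. eventually (Q i) (filtercomap (\<lambda>x. x i) (nhds (0::real)))"
     "\<forall>y. (\<forall>i\<in>{..<d}. Q i y) \<longrightarrow> P y"
    using assms unfolding eventually_INF_finite[OF finite_lessThan] by blast
  have "\<forall>i\<in>{..<d}. \<exists>R. eventually R (nhds (0::real)) \<and> (\<forall>x. R (x i) \<longrightarrow> Q i x)"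
    using Q(1) unfolding eventually_filtercomap by blast
  then obtain R where R: "\<forall>i\<in>{..<d}. eventually (R i) (nhds (0::real)) \<and> (\<forall>x. R i (x i) \<longrightarrow> Q i x)"
    by metis
  have "eventually (\<lambda>v. \<forall>i\<in>{..<d}. R i v) (nhds (0::real))"
    using R by (intro eventually_ball_finite) auto
  then obtain \<delta> where "\<delta> > 0" "\<forall>v. dist v 0 < \<delta> \<longrightarrow> (\<forall>i\<in>{..<d}. R i v)"
    unfolding eventually_nhds_metric by blast
  then show ?thesis
    using R Q(2) by (metis dist_real_def diff_zero lessThan_iff)
qed

lemma esssup_ge_on_positive_set:
  assumes "B \<in> sets M" and "emeasure M B \<noteq> 0" and "\<And>x. x \<in> B \<Longrightarrow> c < f x"
  shows "c \<le> esssup M f"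
proof (rule ccontr)
  assume less: "\<not> c \<le> esssup M f"
  have "AE x in M. x \<notin> B"
    using esssup_AE[of f M]
  proof (rule eventually_mono)
    fix x assume "f x \<le> esssup M f"
    then show "x \<notin> B"
      using assms(3)[of x] less by (meson less_imp_le order_trans)
  qed
  then show False
    using AE_iff_null_sets[OF assms(1)] assms(2) by auto
qed

lemma esssup_Rd_ge_limit:
  fixes F :: "(nat \<Rightarrow> real) \<Rightarrow> real"
  assumes lim: "(F \<longlongrightarrow> F z) (INF i\<in>{..<d}. filtercomap (\<lambda>x. x i) (nhds 0))"
  shows "ereal \<bar>F z\<bar> \<le> esssup (Rd d) (\<lambda>x. ereal \<bar>F x\<bar>)"
proof (rule ccontr)
  assume "\<not> ereal \<bar>F z\<bar> \<le> esssup (Rd d) (\<lambda>x. ereal \<bar>F x\<bar>)"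
  then have "esssup (Rd d) (\<lambda>x. ereal \<bar>F x\<bar>) < ereal \<bar>F z\<bar>"
    by simp
  then obtain v where v: "esssup (Rd d) (\<lambda>x. ereal \<bar>F x\<bar>) < ereal v" "ereal v < ereal \<bar>F z\<bar>"
    using ereal_dense2 by blast
  have "eventually (\<lambda>x. dist (F x) (F z) < \<bar>F z\<bar> - v) (INF i\<in>{..<d}. filtercomap (\<lambda>x. x i) (nhds 0))"
    using v(2) by (intro tendstoD[OF lim]) simp
  then obtain \<delta> where \<delta>: "\<delta> > 0" "\<forall>x. (\<forall>i<d. \<bar>x i\<bar> < \<delta>) \<longrightarrow> dist (F x) (F z) < \<bar>F z\<bar> - v"
    using eventually_coordinate_filter_box by blast
  define B where "B = PiE {..<d} (\<lambda>_. {-\<delta><..<\<delta>::real})"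
  have "ereal v \<le> esssup (Rd d) (\<lambda>x. ereal \<bar>F x\<bar>)"
  proof (rule esssup_ge_on_positive_set)
    show "B \<in> sets (Rd d)"
      unfolding B_def Rd_def by (intro sets_PiM_I_finite) auto
    show "emeasure (Rd d) B \<noteq> 0"
      unfolding B_def Rd_def using \<delta>(1) by (subst lborel_product.emeasure_PiM) (auto simp: prod_ennreal)
    fix x assume "x \<in> B"
    then have "\<forall>i<d. \<bar>x i\<bar> < \<delta>" unfolding B_def by (force simp: PiE_iff abs_less_iff)
    then have "\<bar>F x - F z\<bar> < \<bar>F z\<bar> - v"
      using \<delta>(2) by (simp add: dist_real_def)
    then show "ereal v < ereal \<bar>F x\<bar>"
      using abs_triangle_ineq2[of "F z" "F x"] by (simp add: abs_minus_commute)
  qed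
  then show False using v(1) by simp
qed

lemma esssup_uk_ge_origin:
  assumes t0: "t0 > 0" and t: "t > 0"
  shows "ereal \<bar>uk d C t0 k (\<lambda>_. 0) t\<bar> \<le> esssup (Rd d) (\<lambda>x. ereal \<bar>uk d C t0 k x t\<bar>)"
proof -
  let ?F = "INF i\<in>{..<d}. filtercomap (\<lambda>x. x i) (nhds (0::real))"
  have "((\<lambda>x. uk_factor t0 t n (x i)) \<longlongrightarrow> uk_factor t0 t n 0) ?F" if "i < d" for n i
  proof -
    have "isCont (uk_factor t0 t n) 0"
      unfolding uk_factor_def using DERIV_gaussian_deriv[OF t] DERIV_isCont
      by (intro continuous_intros) blast
    moreover have "((\<lambda>x. x i) \<longlongrightarrow> (0::real)) ?F"
      using that by (intro filterlim_INF'[of i]) (auto intro: filterlim_filtercomap)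
    ultimately show ?thesis
      by (rule isCont_tendsto_compose)
  qed
  then have "((\<lambda>x. uk d C t0 k x t) \<longlongrightarrow> uk d C t0 k (\<lambda>_. 0) t) ?F"
    unfolding uk_eq_sum_prod[OF t0 t] by (intro tendsto_intros) auto
  then show ?thesis
    by (rule esssup_Rd_ge_limit)
qed

lemma abs_uk_origin_at_top:
  assumes "d \<ge> 1" and "C > 0" and "t0 > 0" and "0 < t" and "t < t0"
  shows "filterlim (\<lambda>k. \<bar>uk d C t0 k (\<lambda>_. 0) t\<bar>) at_top sequentially"
proof -
  obtain P where P: "P > 0"
    and origin: "\<And>k. \<bar>uk d C t0 k (\<lambda>_. 0) t\<bar> = P * \<bar>binom_partial_sum d (t0/t) (k div 2)\<bar>"
    using abs_uk_at_origin assms(2-4) by blast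
  have "filterlim (\<lambda>k. \<bar>binom_partial_sum d (t0/t) (k div 2)\<bar>) at_top sequentially"
    using assms by (intro filterlim_compose[OF binom_partial_sum_unbounded filterlim_at_top_div_const_nat]) auto
  then show ?thesis
    unfolding origin by (rule filterlim_tendsto_pos_mult_at_top[OF tendsto_const P])
qed

lemma esssup_uk_tendsto_PInfty:
  assumes "d \<ge> 1" and "C > 0" and "t0 > 0" and "0 < t" and "t < t0"
  shows "((\<lambda>k. esssup (Rd d) (\<lambda>x. ereal \<bar>uk d C t0 k x t\<bar>)) \<longlongrightarrow> \<infinity>) sequentially"
proof (rule tendsto_sandwich)
  show "((\<lambda>k. ereal \<bar>uk d C t0 k (\<lambda>_. 0) t\<bar>) \<longlongrightarrow> \<infinity>) sequentially"
    using abs_uk_origin_at_top[OF assms] by (simp only: tendsto_PInfty_eq_at_top)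
  show "\<forall>\<^sub>F k in sequentially. ereal \<bar>uk d C t0 k (\<lambda>_. 0) t\<bar> \<le> esssup (Rd d) (\<lambda>x. ereal \<bar>uk d C t0 k x t\<bar>)"
    using assms by (intro always_eventually allI esssup_uk_ge_origin) auto
qed auto

lemma abs_uk_origin_ge_dim_1:
  assumes "C > 0" and "t0 > 0" and "0 < t" and "t < t0"
  shows "\<exists>B>0. \<forall>\<^sub>F k in sequentially.
    B * (t0 / t) ^ (k div 2) * sqrt (1 / (real (k div 2) - 1)) \<le> \<bar>uk 1 C t0 k (\<lambda>_. 0) t\<bar>"
proof -
  obtain P where P: "P > 0"
    and origin: "\<And>k. \<bar>uk 1 C t0 k (\<lambda>_. 0) t\<bar> = P * \<bar>binom_partial_sum 1 (t0/t) (k div 2)\<bar>"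
    using abs_uk_at_origin assms(1-3) by blast
  obtain B where "B > 0" and lower: "\<forall>\<^sub>F n in sequentially.
      B * (t0/t)^n * sqrt (1 / (real n - 1)) \<le> \<bar>binom_partial_sum 1 (t0/t) n\<bar>"
    using binom_partial_sum_1_ge assms by force
  have "filterlim (\<lambda>k::nat. k div 2) sequentially sequentially"
    by (simp add: filterlim_at_top_div_const_nat)
  with lower have "\<forall>\<^sub>F k in sequentially. B * (t0/t)^(k div 2) * sqrt (1 / (real (k div 2) - 1))
      \<le> \<bar>binom_partial_sum 1 (t0/t) (k div 2)\<bar>"
    by (rule eventually_compose_filterlim)
  then have "\<forall>\<^sub>F k in sequentially. P * B * (t0/t)^(k div 2) * sqrt (1 / (real (k div 2) - 1))
      \<le> \<bar>uk 1 C t0 k (\<lambda>_. 0) t\<bar>"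
    unfolding origin using P by (elim eventually_mono) (simp add: mult.assoc)
  then show ?thesis
    using \<open>B > 0\<close> P by (intro exI[of _ "P * B"] conjI) simp_all
qed

lemma abs_uk_origin_ge_dim_ge_2:
  assumes "d \<ge> 2" and "C > 0" and "t0 > 0" and "0 < t" and "t < t0"
  shows "\<exists>c>0. \<forall>k::nat. c * (t0 / t - 1) * (t0 / t) powr (real (k div 2) - 1) \<le> \<bar>uk d C t0 k (\<lambda>_. 0) t\<bar>"
proof -
  obtain P where P: "P > 0"
    and origin: "\<And>k. \<bar>uk d C t0 k (\<lambda>_. 0) t\<bar> = P * \<bar>binom_partial_sum d (t0/t) (k div 2)\<bar>"
    using abs_uk_at_origin assms(2-4) by blast
  have "\<forall>k. P * (t0 / t - 1) * (t0 / t) powr (real (k div 2) - 1) \<le> \<bar>uk d C t0 k (\<lambda>_. 0) t\<bar>"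
    using binom_partial_sum_ge[OF assms(1)] P assms unfolding origin by (simp add: mult.assoc)
  then show ?thesis
    using P by blast
qed

theorem mainTheorem4:
  fixes d :: nat and C t0 t :: real
  assumes "d \<ge> 1" and "C > 0" and "t0 > 0" and "0 < t" and "t < t0"
  shows "((\<lambda>k. esssup (Rd d) (\<lambda>x. ereal \<bar>uk d C t0 k x t\<bar>)) \<longlongrightarrow> \<infinity>) sequentially
    \<and> (d = 1 \<longrightarrow> (\<exists>B>0. \<forall>\<^sub>F k in sequentially.
          \<bar>uk d C t0 k (\<lambda>_. 0) t\<bar> \<ge>
            B * (t0 / t) ^ (k div 2) * sqrt (1 / (real (k div 2) - 1))))
    \<and> (d \<ge> 2 \<longrightarrow> (\<exists>c>0. \<forall>k::nat.
          \<bar>uk d C t0 k (\<lambda>_. 0) t\<bar> \<ge>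
            c * (t0 / t - 1) * (t0 / t) powr (real (k div 2) - 1)))"
  using esssup_uk_tendsto_PInfty[OF assms] abs_uk_origin_ge_dim_1[OF assms(2-5)]
    abs_uk_origin_ge_dim_ge_2[OF _ assms(2-5)] by auto

end
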